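(* Let $\ell\ge 2$, let $G$ be an $n$-vertex graph with average degree $d>0$, and let $x_{i-1}y_{i-1}$ and $x_{i+1}y_{i+1}$ be vertex-disjoint edges of $G$ such that $(x_{i-1},y_{i-1},x_{i+1},y_{i+1})$ is not rich. Then $$\sum_{(x_i,y_i)}\frac{1}{\max\big(d(x_{i-1},y_i),\frac{d^2}{n}\big)\cdot \max\big(d(x_i,y_{i+1}),\frac{d^2}{n}\big)}\le 8\ell,$$ where the sum is over all pairs $(x_i,y_i)$ of vertices such that $x_{i-1},y_{i-1},x_i,y_i,x_{i+1},y_{i+1}$ are distinct and $x_iy_i,\ x_{i-1}x_i,\ x_ix_{i+1},\ y_{i-1}y_i,\ y_iy_{i+1}\in E(G)$ (i.e. these six vertices form a copy of $P_3^{\square}$).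
   Context: $d(a,b)$ denotes the number of common neighbours of $a,b$ in $G$. For distinct vertices $w,z,w',z'$, the $4$-tuple $(w,z,w',z')$ is rich if $wz,w'z'\in E(G)$ and there are at least $4\ell$ pairwise vertex-disjoint edges $xy\in E(G)$ with $wx,xw',zy,yz'\in E(G)$. *)

theory Defs
  imports Complex_Main
begin

definition simple_graph :: "'a set \<Rightarrow> ('a \<Rightarrow> 'a \<Rightarrow> bool) \<Rightarrow> bool" where
  "simple_graph V E \<longleftrightarrow> finite V \<and> (\<forall>u v. E u v \<longrightarrow> u \<in> V \<and> v \<in> V)
     \<and> (\<forall>u v. E u v \<longrightarrow> E v u) \<and> (\<forall>u. \<not> E u u)"

definition num_edges :: "'a set \<Rightarrow> ('a \<Rightarrow> 'a \<Rightarrow> bool) \<Rightarrow> nat" where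
  "num_edges V E = card {{u, v} | u v. u \<in> V \<and> v \<in> V \<and> E u v}"

definition avg_degree :: "'a set \<Rightarrow> ('a \<Rightarrow> 'a \<Rightarrow> bool) \<Rightarrow> real" where
  "avg_degree V E = 2 * real (num_edges V E) / real (card V)"

definition codeg :: "'a set \<Rightarrow> ('a \<Rightarrow> 'a \<Rightarrow> bool) \<Rightarrow> 'a \<Rightarrow> 'a \<Rightarrow> nat" where
  "codeg V E a b = card {c \<in> V. E a c \<and> E b c}"

definition rich :: "'a set \<Rightarrow> ('a \<Rightarrow> 'a \<Rightarrow> bool) \<Rightarrow> nat \<Rightarrow> 'a \<Rightarrow> 'a \<Rightarrow> 'a \<Rightarrow> 'a \<Rightarrow> bool" where
  "rich V E l w z w' z' \<longleftrightarrow>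
     w \<in> V \<and> z \<in> V \<and> w' \<in> V \<and> z' \<in> V \<and> distinct [w, z, w', z'] \<and> E w z \<and> E w' z' \<and>
     (\<exists>M. M \<subseteq> {(x, y). x \<in> V \<and> y \<in> V \<and> E x y \<and> E w x \<and> E x w' \<and> E z y \<and> E y z'}
        \<and> finite M \<and> card M \<ge> 4 * l
        \<and> (\<forall>p\<in>M. \<forall>q\<in>M. p \<noteq> q \<longrightarrow> {fst p, snd p} \<inter> {fst q, snd q} = {}))"

end

theory Submission
  imports Defs
begin

text \<open>Write xa, ya, xb, yb for x_{i-1}, y_{i-1}, x_{i+1}, y_{i+1}. Take a maximal family M of
  vertex-disjoint edges xy among the pairs (x,y) of the sum. As the tuple is not rich, M has
  fewer than 4l edges, so its vertex set W has fewer than 8l vertices, and by maximality every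
  pair of the sum meets W. For fixed x = v, the vertices y are common neighbours of v and yb,
  while v and ya are two distinct common neighbours of xa and y; hence the terms with x = v sum
  to at most d(v,yb) / (2 d(v,yb)) = 1/2, and symmetrically for y = v. Summing over W gives 8l.\<close>

lemma maximal_pairwise_subset:
  assumes "finite S" "symp R"
  obtains M where "M \<subseteq> S" "pairwise R M" "\<And>p. p \<in> S \<Longrightarrow> p \<notin> M \<Longrightarrow> \<exists>q\<in>M. \<not> R p q"
proof -
  let ?Ms = "{M. M \<subseteq> S \<and> pairwise R M}"
  have "finite ?Ms" using assms(1) by (intro finite_subset[of ?Ms "Pow S"]) auto
  moreover have "{} \<in> ?Ms" by simp
  ultimately obtain M where "M \<in> ?Ms" and max: "\<forall>B\<in>?Ms. M \<subseteq> B \<longrightarrow> M = B"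
    using finite_has_maximal[of ?Ms] by blast
  then have M: "M \<subseteq> S" "pairwise R M" by auto
  have "\<exists>q\<in>M. \<not> R p q" if "p \<in> S" "p \<notin> M" for p
  proof (rule ccontr)
    assume "\<not> (\<exists>q\<in>M. \<not> R p q)"
    then have "insert p M \<in> ?Ms"
      using M \<open>p \<in> S\<close> assms(2) by (auto simp: pairwise_insert symp_def)
    then have "M = insert p M" using max by blast
    with \<open>p \<notin> M\<close> show False by blast
  qed
  with M that show thesis by blast
qed

lemma maximal_matching_covers:
  assumes "finite S"
  obtains M where "M \<subseteq> S" "pairwise (\<lambda>p q. disjnt {fst p, snd p} {fst q, snd q}) M"
    "\<And>p. p \<in> S \<Longrightarrow> fst p \<in> fst ` M \<union> snd ` M \<or> snd p \<in> fst ` M \<union> snd ` M"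
proof -
  have "symp (\<lambda>p q. disjnt {fst p, snd p} {fst q, snd q})"
    by (auto simp: symp_def disjnt_sym)
  then obtain M where M: "M \<subseteq> S" "pairwise (\<lambda>p q. disjnt {fst p, snd p} {fst q, snd q}) M"
    and max: "\<And>p. p \<in> S \<Longrightarrow> p \<notin> M \<Longrightarrow> \<exists>q\<in>M. \<not> disjnt {fst p, snd p} {fst q, snd q}"
    using maximal_pairwise_subset[OF assms] by blast
  have "fst p \<in> fst ` M \<union> snd ` M \<or> snd p \<in> fst ` M \<union> snd ` M" if "p \<in> S" for p
  proof (cases "p \<in> M")
    case False
    then obtain q where "q \<in> M" "\<not> disjnt {fst p, snd p} {fst q, snd q}"
      using max \<open>p \<in> S\<close> by blast
    moreover have "fst q \<in> fst ` M" "snd q \<in> snd ` M" using \<open>q \<in> M\<close> by auto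
    ultimately show ?thesis unfolding disjnt_def by blast
  qed auto
  with M show thesis using that by blast
qed

lemma card_vertices_le:
  assumes "finite M"
  shows "card (fst ` M \<union> snd ` M) \<le> 2 * card M"
  using card_Un_le[of "fst ` M" "snd ` M"] card_image_le[OF assms, of fst]
    card_image_le[OF assms, of snd] by linarith

lemma sum_le_card_vertex_cover:
  fixes f :: "'a \<times> 'a \<Rightarrow> real"
  assumes "finite S" "finite W" and cover: "\<And>p. p \<in> S \<Longrightarrow> fst p \<in> W \<or> snd p \<in> W"
    and nonneg: "\<And>p. p \<in> S \<Longrightarrow> 0 \<le> f p"
    and fibres: "\<And>v. sum f {p \<in> S. fst p = v} + sum f {p \<in> S. snd p = v} \<le> c"
  shows "sum f S \<le> real (card W) * c"
proof -
  have "sum f S \<le> (\<Sum>p\<in>S. (\<Sum>v\<in>W. if fst p = v then f p else 0) + (\<Sum>v\<in>W. if snd p = v then f p else 0))"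
    using cover nonneg assms(2) by (intro sum_mono) (auto simp: sum.delta)
  also have "\<dots> = (\<Sum>v\<in>W. sum f {p \<in> S. fst p = v} + sum f {p \<in> S. snd p = v})"
    using assms(1) by (simp add: sum.distrib sum.swap[of _ S W] sum.inter_filter)
  also have "\<dots> \<le> real (card W) * c"
    using sum_mono[of W _ "\<lambda>_. c", OF fibres] by simp
  finally show ?thesis .
qed

lemma sum_inverse_max_le_half:
  fixes a :: "'b \<Rightarrow> nat" and g :: "'b \<Rightarrow> 'c" and D :: real
  assumes "finite N" "inj_on g P" "g ` P \<subseteq> N" "\<And>p. p \<in> P \<Longrightarrow> 2 \<le> a p"
  shows "(\<Sum>p\<in>P. 1 / (max (real (a p)) D * max (real (card N)) D)) \<le> 1/2"
proof (cases "P = {}")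
  case False
  have "finite P" using assms(1-3) finite_imageD finite_subset by blast
  have card_le: "card P \<le> card N" using card_inj_on_le assms(1-3) by blast
  moreover have "card P > 0" using False \<open>finite P\<close> by (simp add: card_gt_0_iff)
  ultimately have "card N \<ge> 1" by linarith
  have "1 / (max (real (a p)) D * max (real (card N)) D) \<le> 1 / (2 * real (card N))"
    if "p \<in> P" for p
  proof -
    have "1 / (max (real (a p)) D * max (real (card N)) D) \<le> 1 / (real (a p) * real (card N))"
      using assms(4)[OF that] \<open>card N \<ge> 1\<close> by (intro divide_left_mono mult_mono) auto
    also have "\<dots> \<le> 1 / (2 * real (card N))"
      using assms(4)[OF that] \<open>card N \<ge> 1\<close> by (intro divide_left_mono mult_right_mono) auto
    finally show ?thesis .
  qed
  then have "(\<Sum>p\<in>P. 1 / (max (real (a p)) D * max (real (card N)) D))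
      \<le> real (card P) * (1 / (2 * real (card N)))"
    by (rule sum_bounded_above)
  also have "\<dots> \<le> real (card N) * (1 / (2 * real (card N)))"
    using card_le by (intro mult_right_mono) auto
  also have "\<dots> = 1/2" using \<open>card N \<ge> 1\<close> by simp
  finally show ?thesis .
qed simp

lemma two_le_codeg:
  assumes "simple_graph V E" "E a u" "E b u" "E a w" "E b w" "u \<noteq> w"
  shows "2 \<le> codeg V E a b"
proof -
  have "{u, w} \<subseteq> {c \<in> V. E a c \<and> E b c}" "finite {c \<in> V. E a c \<and> E b c}"
    using assms unfolding simple_graph_def by auto
  then show ?thesis
    unfolding codeg_def using card_mono[of _ "{u, w}"] \<open>u \<noteq> w\<close> by fastforce
qed

lemma rich_of_matching:
  assumes "simple_graph V E" "E w z" "E w' z'" "distinct [w, z, w', z']"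
    and "M \<subseteq> {(x, y). E x y \<and> E w x \<and> E x w' \<and> E z y \<and> E y z'}" "finite M"
    and "pairwise (\<lambda>p q. disjnt {fst p, snd p} {fst q, snd q}) M" "4 * l \<le> card M"
  shows "rich V E l w z w' z'"
  unfolding rich_def
proof (intro conjI exI[of _ M])
  show "M \<subseteq> {(x, y). x \<in> V \<and> y \<in> V \<and> E x y \<and> E w x \<and> E x w' \<and> E z y \<and> E y z'}"
    using assms(1,5) unfolding simple_graph_def by blast
  show "\<forall>p\<in>M. \<forall>q\<in>M. p \<noteq> q \<longrightarrow> {fst p, snd p} \<inter> {fst q, snd q} = {}"
    using assms(7) by (auto simp: pairwise_def disjnt_def)
qed (use assms in \<open>auto simp: simple_graph_def\<close>)

definition ladder_extensions ::
    "'a set \<Rightarrow> ('a \<Rightarrow> 'a \<Rightarrow> bool) \<Rightarrow> 'a \<Rightarrow> 'a \<Rightarrow> 'a \<Rightarrow> 'a \<Rightarrow> ('a \<times> 'a) set" where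
  "ladder_extensions V E xa ya xb yb = {(x, y). x \<in> V \<and> y \<in> V \<and> distinct [xa, ya, x, y, xb, yb]
     \<and> E x y \<and> E xa x \<and> E x xb \<and> E ya y \<and> E y yb}"

definition ladder_weight ::
    "'a set \<Rightarrow> ('a \<Rightarrow> 'a \<Rightarrow> bool) \<Rightarrow> 'a \<Rightarrow> 'a \<Rightarrow> real \<Rightarrow> 'a \<times> 'a \<Rightarrow> real" where
  "ladder_weight V E xa yb D =
     (\<lambda>(x, y). 1 / (max (real (codeg V E xa y)) D * max (real (codeg V E x yb)) D))"

lemma finite_ladder_extensions:
  assumes "simple_graph V E"
  shows "finite (ladder_extensions V E xa ya xb yb)"
proof -
  have "ladder_extensions V E xa ya xb yb \<subseteq> V \<times> V" by (auto simp: ladder_extensions_def)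
  with assms show ?thesis by (simp add: simple_graph_def finite_subset)
qed

lemma ladder_weight_fibres_le_one:
  fixes D :: real
  assumes "simple_graph V E" "E xa ya" "E xb yb"
  defines "S \<equiv> ladder_extensions V E xa ya xb yb" and "f \<equiv> ladder_weight V E xa yb D"
  shows "sum f {p \<in> S. fst p = v} + sum f {p \<in> S. snd p = v} \<le> 1"
proof -
  have fin: "finite V" and sym: "\<And>u v. E u v \<Longrightarrow> E v u"
    using assms(1) unfolding simple_graph_def by auto
  have codeg_xa: "2 \<le> codeg V E xa y" if "(x, y) \<in> S" for x y
    using that assms(1,2) sym
    by (intro two_le_codeg[where u = x and w = ya]) (auto simp: S_def ladder_extensions_def)
  have codeg_yb: "2 \<le> codeg V E x yb" if "(x, y) \<in> S" for x y
    using that assms(1,3) sym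
    by (intro two_le_codeg[where u = y and w = xb]) (auto simp: S_def ladder_extensions_def)
  have "sum f {p \<in> S. fst p = v} = (\<Sum>p\<in>{p \<in> S. fst p = v}.
      1 / (max (real (codeg V E xa (snd p))) D * max (real (card {c \<in> V. E v c \<and> E yb c})) D))"
    by (rule sum.cong) (auto simp: f_def ladder_weight_def codeg_def)
  also have "\<dots> \<le> 1/2"
    using fin sym codeg_xa
    by (intro sum_inverse_max_le_half[where g = snd]) (auto simp: inj_on_def S_def ladder_extensions_def)
  finally have fst_fibre: "sum f {p \<in> S. fst p = v} \<le> 1/2" .
  have "sum f {p \<in> S. snd p = v} = (\<Sum>p\<in>{p \<in> S. snd p = v}.
      1 / (max (real (codeg V E (fst p) yb)) D * max (real (card {c \<in> V. E xa c \<and> E v c})) D))"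
    by (rule sum.cong) (auto simp: f_def ladder_weight_def codeg_def mult.commute)
  also have "\<dots> \<le> 1/2"
    using fin sym codeg_yb
    by (intro sum_inverse_max_le_half[where g = fst]) (auto simp: inj_on_def S_def ladder_extensions_def)
  finally have snd_fibre: "sum f {p \<in> S. snd p = v} \<le> 1/2" .
  from fst_fibre snd_fibre show ?thesis by linarith
qed

theorem lemma5p10:
  fixes V :: "'a set" and E :: "'a \<Rightarrow> 'a \<Rightarrow> bool" and l :: nat
    and xa ya xb yb :: 'a
  assumes "simple_graph V E"
    and "l \<ge> 2"
    and "avg_degree V E > 0"
    and "E xa ya" and "E xb yb" and "distinct [xa, ya, xb, yb]"
    and "\<not> rich V E l xa ya xb yb"
  shows "(\<Sum>(x, y) \<in> {(x, y). x \<in> V \<and> y \<in> V \<and> distinct [xa, ya, x, y, xb, yb]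
              \<and> E x y \<and> E xa x \<and> E x xb \<and> E ya y \<and> E y yb}.
           1 / (max (real (codeg V E xa y)) ((avg_degree V E)\<^sup>2 / real (card V))
              * max (real (codeg V E x yb)) ((avg_degree V E)\<^sup>2 / real (card V))))
         \<le> 8 * real l"
proof -
  define S where "S = ladder_extensions V E xa ya xb yb"
  define f where "f = ladder_weight V E xa yb ((avg_degree V E)\<^sup>2 / real (card V))"
  have "finite S" using assms(1) by (simp add: S_def finite_ladder_extensions)
  then obtain M where M: "M \<subseteq> S" "pairwise (\<lambda>p q. disjnt {fst p, snd p} {fst q, snd q}) M"
    and cover: "\<And>p. p \<in> S \<Longrightarrow> fst p \<in> fst ` M \<union> snd ` M \<or> snd p \<in> fst ` M \<union> snd ` M"
    using maximal_matching_covers by blast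
  have "finite M" using M(1) \<open>finite S\<close> finite_subset by blast
  have "card M < 4 * l"
    using rich_of_matching[OF assms(1,4,5,6) _ \<open>finite M\<close> M(2)] M(1) assms(7)
    by (force simp: S_def ladder_extensions_def)
  have "sum f S \<le> real (card (fst ` M \<union> snd ` M)) * 1"
    using \<open>finite S\<close> \<open>finite M\<close> cover ladder_weight_fibres_le_one[OF assms(1,4,5)]
    by (intro sum_le_card_vertex_cover) (auto simp: S_def f_def ladder_weight_def split: prod.splits)
  also have "\<dots> \<le> 8 * real l"
    using card_vertices_le[OF \<open>finite M\<close>] \<open>card M < 4 * l\<close> by simp
  finally show ?thesis by (simp add: S_def f_def ladder_extensions_def ladder_weight_def)
qed

end
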